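(* Let $\mathbb{F}$ be a field, $n\ge4$, and let $g_1,g_2\in\mathrm{GL}_n(\mathbb{F})$ both have minimal polynomials of degree $2$. Then $\langle g_1,g_2\rangle$ does not act absolutely irreducibly on $\mathbb{F}^n$. *)

theory Defs
  imports "Jordan_Normal_Form.Matrix" "HOL-Algebra.Algebraic_Closure_Type"
begin

definition mat_poly_eval :: "nat \<Rightarrow> 'a::field poly \<Rightarrow> 'a mat \<Rightarrow> 'a mat" where
  "mat_poly_eval n p A =
     foldr (\<lambda>i M. coeff p i \<cdot>\<^sub>m (A ^\<^sub>m i) + M) [0..<Suc (degree p)] (0\<^sub>m n n)"

definition is_minimal_poly :: "nat \<Rightarrow> 'a::field mat \<Rightarrow> 'a poly \<Rightarrow> bool" where
  "is_minimal_poly n A p \<longleftrightarrow>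
     lead_coeff p = 1 \<and> mat_poly_eval n p A = 0\<^sub>m n n \<and>
     (\<forall>q. mat_poly_eval n q A = 0\<^sub>m n n \<longrightarrow> p dvd q)"

(* the minimal polynomial of A (exists and is unique for square A) *)
definition minimal_poly :: "nat \<Rightarrow> 'a::field mat \<Rightarrow> 'a poly" where
  "minimal_poly n A = (THE p. is_minimal_poly n A p)"

inductive_set gen_group :: "nat \<Rightarrow> 'a::field mat set \<Rightarrow> 'a mat set"
  for n :: nat and S :: "'a mat set" where
  gen_one: "1\<^sub>m n \<in> gen_group n S"
| gen_base: "A \<in> S \<Longrightarrow> A \<in> gen_group n S"
| gen_mult: "A \<in> gen_group n S \<Longrightarrow> B \<in> gen_group n S \<Longrightarrow> A * B \<in> gen_group n S"
| gen_inv: "A \<in> gen_group n S \<Longrightarrow> B \<in> carrier_mat n n \<Longrightarrow> A * B = 1\<^sub>m n \<Longrightarrow> B \<in> gen_group n S"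

definition is_subspace :: "nat \<Rightarrow> 'a::field vec set \<Rightarrow> bool" where
  "is_subspace n W \<longleftrightarrow> W \<subseteq> carrier_vec n \<and> 0\<^sub>v n \<in> W \<and>
     (\<forall>v\<in>W. \<forall>w\<in>W. v + w \<in> W) \<and> (\<forall>c. \<forall>v\<in>W. c \<cdot>\<^sub>v v \<in> W)"

definition acts_irreducibly :: "nat \<Rightarrow> 'a::field mat set \<Rightarrow> bool" where
  "acts_irreducibly n G \<longleftrightarrow> n > 0 \<and>
     (\<forall>W. is_subspace n W \<and> (\<forall>g\<in>G. \<forall>w\<in>W. g *\<^sub>v w \<in> W) \<longrightarrow>
        W = {0\<^sub>v n} \<or> W = carrier_vec n)"

definition acts_absolutely_irreducibly :: "nat \<Rightarrow> 'a::field mat set \<Rightarrow> bool" where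
  "acts_absolutely_irreducibly n G \<longleftrightarrow>
     acts_irreducibly n (map_mat to_ac ` G)"

end

theory Submission
  imports Defs "Jordan_Normal_Form.Char_Poly"
begin

text \<open>
  Over the algebraic closure each generator \<open>x\<close> satisfies \<open>x\<^sup>2 = \<alpha> x + \<beta>\<close> with \<open>\<beta> \<noteq> 0\<close>,
  so \<open>x\<^sup>-\<^sup>1 = \<beta>\<^sup>-\<^sup>1 (x - \<alpha>)\<close> and every subspace invariant under \<open>x\<close> is invariant under
  \<open>x\<^sup>-\<^sup>1\<close>. The matrix \<open>z = x y + y x - \<alpha> y\<close> commutes with \<open>x\<close>, so \<open>x\<close> and \<open>z\<close> have a
  common eigenvector \<open>v\<close>, say \<open>x v = \<theta> v\<close> and \<open>z v = \<mu> v\<close>. Then \<open>x (y v) = \<mu> v + (\<alpha> - \<theta>) y v\<close>,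
  and \<open>y (y v)\<close> lies in the span of \<open>v\<close> and \<open>y v\<close> by the quadratic relation of \<open>y\<close>. This span
  is a nonzero subspace of dimension at most \<open>2 < n\<close> invariant under the whole group.
\<close>

lemma eq_carrier_matI:
  assumes "A \<in> carrier_mat nr nc" "B \<in> carrier_mat nr nc"
    and "\<And>i j. i < nr \<Longrightarrow> j < nc \<Longrightarrow> A $$ (i,j) = B $$ (i,j)"
  shows "A = B"
  using assms by (intro eq_matI) auto

lemma smult_mat_mult_vec:
  assumes "A \<in> carrier_mat nr nc" "v \<in> carrier_vec nc"
  shows "(k \<cdot>\<^sub>m A) *\<^sub>v v = k \<cdot>\<^sub>v (A *\<^sub>v v)"
  using assms by (intro eq_vecI) (auto simp: scalar_prod_def sum_distrib_left mult.assoc)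

lemma mult_mat_inverse:
  fixes A B A' B' :: "'a::semiring_1 mat"
  assumes "A \<in> carrier_mat n n" "B \<in> carrier_mat n n" "A' \<in> carrier_mat n n" "B' \<in> carrier_mat n n"
    and "A * A' = 1\<^sub>m n" "B * B' = 1\<^sub>m n"
  shows "(A * B) * (B' * A') = 1\<^sub>m n"
proof -
  have "(A * B) * (B' * A') = A * ((B * B') * A')"
    using assms(1-4) by (simp add: assoc_mult_mat[of _ n n _ n _ n])
  also have "\<dots> = 1\<^sub>m n" using assms by simp
  finally show ?thesis .
qed

lemma right_inverse_unique_mat:
  fixes A B h :: "'a::semiring_1 mat"
  assumes "A \<in> carrier_mat n n" "B \<in> carrier_mat n n" "h \<in> carrier_mat n n"
    and "h * A = 1\<^sub>m n" "A * B = 1\<^sub>m n"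
  shows "B = h"
proof -
  have "B = (h * A) * B" using assms(2,4) by simp
  also have "\<dots> = h" using assoc_mult_mat[OF assms(3,1,2)] assms(3,5) by simp
  finally show ?thesis .
qed

lemma invertible_mat_left_inverse:
  assumes A: "A \<in> carrier_mat n n" and "invertible_mat A"
  obtains B where "B \<in> carrier_mat n n" "B * A = 1\<^sub>m n"
proof -
  from assms(2) obtain B where AB: "A * B = 1\<^sub>m (dim_row A)" and BA: "B * A = 1\<^sub>m (dim_row B)"
    unfolding invertible_mat_def inverts_mat_def by blast
  have rows: "dim_row B = n" using arg_cong[OF BA, of dim_col] A by simp
  moreover have "dim_col B = n" using arg_cong[OF AB, of dim_col] A by simp
  ultimately have "B \<in> carrier_mat n n" by (rule carrier_matI)
  moreover have "B * A = 1\<^sub>m n" using BA unfolding rows .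
  ultimately show thesis by (rule that)
qed

lemma underdetermined_system_has_nonzero_solution:
  fixes f :: "nat \<Rightarrow> nat \<Rightarrow> 'a::field"
  assumes "m < N"
  shows "\<exists>c \<in> carrier_vec N. c \<noteq> 0\<^sub>v N \<and> (\<forall>i<m. (\<Sum>j<N. f i j * c $ j) = 0)"
proof -
  define M where "M = mat\<^sub>r N N (\<lambda>i. if i = m then 0\<^sub>v N else vec N (f i))"
  have M: "M \<in> carrier_mat N N" unfolding M_def by simp
  have "det M = 0" unfolding M_def by (rule det_row_0) (use assms in auto)
  then obtain c where c: "c \<in> carrier_vec N" "c \<noteq> 0\<^sub>v N" "M *\<^sub>v c = 0\<^sub>v N"
    using det_0_iff_vec_prod_zero_field[OF M] by blast
  have "(\<Sum>j<N. f i j * c $ j) = (M *\<^sub>v c) $ i" if "i < m" for i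
    using that assms c(1) by (simp add: M_def scalar_prod_def lessThan_atLeast0)
  then show ?thesis using c assms by auto
qed

lemma foldr_mat_poly_terms:
  fixes A :: "'a::field mat"
  shows "foldr (\<lambda>k M. coeff p k \<cdot>\<^sub>m (A ^\<^sub>m k) + M) ks (0\<^sub>m n n) \<in> carrier_mat n n \<and>
    (A \<in> carrier_mat n n \<longrightarrow> (\<forall>i<n. \<forall>j<n.
      foldr (\<lambda>k M. coeff p k \<cdot>\<^sub>m (A ^\<^sub>m k) + M) ks (0\<^sub>m n n) $$ (i,j)
        = (\<Sum>k\<leftarrow>ks. coeff p k * (A ^\<^sub>m k) $$ (i,j))))"
  by (induction ks) auto

lemma mat_poly_eval_carrier [simp]: "mat_poly_eval n p A \<in> carrier_mat n n"
  unfolding mat_poly_eval_def using foldr_mat_poly_terms by blast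

lemma dim_mat_poly_eval [simp]:
  "dim_row (mat_poly_eval n p A) = n" "dim_col (mat_poly_eval n p A) = n"
  using mat_poly_eval_carrier by blast+

lemma index_mat_poly_eval:
  assumes A: "A \<in> carrier_mat n n" and K: "degree p < K" and ij: "i < n" "j < n"
  shows "mat_poly_eval n p A $$ (i,j) = (\<Sum>k<K. coeff p k * (A ^\<^sub>m k) $$ (i,j))"
proof -
  have "mat_poly_eval n p A $$ (i,j) = (\<Sum>k\<leftarrow>[0..<Suc (degree p)]. coeff p k * (A ^\<^sub>m k) $$ (i,j))"
    unfolding mat_poly_eval_def using foldr_mat_poly_terms A ij by blast
  also have "\<dots> = (\<Sum>k<Suc (degree p). coeff p k * (A ^\<^sub>m k) $$ (i,j))"
    by (simp add: interv_sum_list_conv_sum_set_nat lessThan_atLeast0)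
  also have "\<dots> = (\<Sum>k<K. coeff p k * (A ^\<^sub>m k) $$ (i,j))"
    by (rule sum.mono_neutral_left) (use K in \<open>auto simp: coeff_eq_0\<close>)
  finally show ?thesis .
qed

lemma mat_poly_eval_0 [simp]:
  assumes "A \<in> carrier_mat n n"
  shows "mat_poly_eval n 0 A = 0\<^sub>m n n"
  by (rule eq_carrier_matI[of _ n n]) (use assms index_mat_poly_eval[OF assms, of 0 1] in simp_all)

lemma mat_poly_eval_add:
  assumes A: "A \<in> carrier_mat n n"
  shows "mat_poly_eval n (p + q) A = mat_poly_eval n p A + mat_poly_eval n q A"
proof (rule eq_carrier_matI)
  fix i j assume ij: "i < n" "j < n"
  define K where "K = Suc (max (degree p) (degree q))"
  have "degree p < K" "degree q < K" "degree (p + q) < K"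
    using degree_add_le_max[of p q] unfolding K_def by linarith+
  from this[THEN index_mat_poly_eval[OF A _ ij]]
  show "mat_poly_eval n (p + q) A $$ (i,j) = (mat_poly_eval n p A + mat_poly_eval n q A) $$ (i,j)"
    using ij by (simp add: sum.distrib distrib_right del: sum.lessThan_Suc)
qed simp_all

lemma mat_poly_eval_smult:
  assumes A: "A \<in> carrier_mat n n"
  shows "mat_poly_eval n (smult c p) A = c \<cdot>\<^sub>m mat_poly_eval n p A"
proof (rule eq_carrier_matI)
  fix i j assume ij: "i < n" "j < n"
  have "degree (smult c p) < Suc (degree p)" by (simp add: degree_smult_le le_imp_less_Suc)
  from index_mat_poly_eval[OF A this ij] index_mat_poly_eval[OF A lessI ij, of p]
  show "mat_poly_eval n (smult c p) A $$ (i,j) = (c \<cdot>\<^sub>m mat_poly_eval n p A) $$ (i,j)"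
    using ij by (simp add: sum_distrib_left mult.assoc del: sum.lessThan_Suc)
qed simp_all

lemma mat_poly_eval_pCons_0:
  assumes A: "A \<in> carrier_mat n n"
  shows "mat_poly_eval n (pCons 0 p) A = mat_poly_eval n p A * A"
proof (rule eq_carrier_matI)
  fix i j assume ij: "i < n" "j < n"
  let ?K = "Suc (degree p)"
  have "mat_poly_eval n (pCons 0 p) A $$ (i,j) = (\<Sum>k<Suc ?K. coeff (pCons 0 p) k * (A ^\<^sub>m k) $$ (i,j))"
    by (rule index_mat_poly_eval[OF A _ ij]) (simp add: degree_pCons_le le_imp_less_Suc)
  also have "\<dots> = (\<Sum>k<?K. coeff p k * (A ^\<^sub>m k * A) $$ (i,j))"
    by (subst sum.lessThan_Suc_shift) simp
  also have "\<dots> = (\<Sum>k<?K. \<Sum>l<n. coeff p k * (A ^\<^sub>m k) $$ (i,l) * A $$ (l,j))"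
    using A ij by (simp add: scalar_prod_def lessThan_atLeast0 sum_distrib_left mult.assoc)
  also have "\<dots> = (\<Sum>l<n. (\<Sum>k<?K. coeff p k * (A ^\<^sub>m k) $$ (i,l)) * A $$ (l,j))"
    by (subst sum.swap) (simp add: sum_distrib_right del: sum.lessThan_Suc)
  also have "\<dots> = (\<Sum>l<n. mat_poly_eval n p A $$ (i,l) * A $$ (l,j))"
    by (rule sum.cong[OF refl])
      (simp add: index_mat_poly_eval[OF A lessI ij(1)] del: sum.lessThan_Suc)
  also have "\<dots> = (mat_poly_eval n p A * A) $$ (i,j)"
    using A ij by (simp add: scalar_prod_def lessThan_atLeast0)
  finally show "mat_poly_eval n (pCons 0 p) A $$ (i,j) = (mat_poly_eval n p A * A) $$ (i,j)" .
qed (use mult_carrier_mat[OF mat_poly_eval_carrier A] in simp_all)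

lemma mat_poly_eval_mult_eq_0:
  assumes A: "A \<in> carrier_mat n n" and p: "mat_poly_eval n p A = 0\<^sub>m n n"
  shows "mat_poly_eval n (p * s) A = 0\<^sub>m n n"
proof (induction s)
  case (pCons a s)
  have "mat_poly_eval n (p * pCons a s) A = a \<cdot>\<^sub>m mat_poly_eval n p A + mat_poly_eval n (p * s) A * A"
    by (simp add: mult_pCons_right mat_poly_eval_add[OF A] mat_poly_eval_smult[OF A]
        mat_poly_eval_pCons_0[OF A])
  also have "\<dots> = 0\<^sub>m n n" using pCons(2) p A by simp
  finally show ?case .
qed (use A in simp)

lemma mat_poly_eval_quadratic:
  assumes A: "A \<in> carrier_mat n n"
  shows "mat_poly_eval n [:a, b, c:] A = a \<cdot>\<^sub>m 1\<^sub>m n + b \<cdot>\<^sub>m A + c \<cdot>\<^sub>m (A * A)"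
proof (rule eq_carrier_matI)
  fix i j assume ij: "i < n" "j < n"
  have "degree [:a, b, c:] < 3"
    using degree_pCons_le[of b "[:c:]"] by (simp add: degree_pCons_le le_imp_less_Suc)
  then have "mat_poly_eval n [:a, b, c:] A $$ (i,j) = (\<Sum>k<3. coeff [:a, b, c:] k * (A ^\<^sub>m k) $$ (i,j))"
    by (rule index_mat_poly_eval[OF A _ ij])
  also have "\<dots> = (a \<cdot>\<^sub>m 1\<^sub>m n + b \<cdot>\<^sub>m A + c \<cdot>\<^sub>m (A * A)) $$ (i,j)"
    using A ij by (simp add: numeral_3_eq_3 carrier_matD[OF A] del: index_mult_mat(1))
  finally show "mat_poly_eval n [:a, b, c:] A $$ (i,j) = (a \<cdot>\<^sub>m 1\<^sub>m n + b \<cdot>\<^sub>m A + c \<cdot>\<^sub>m (A * A)) $$ (i,j)" .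
qed (use A in simp_all)

section \<open>The minimal polynomial\<close>

lemma exists_annihilating_poly:
  fixes A :: "'a::field mat"
  assumes A: "A \<in> carrier_mat n n"
  shows "\<exists>q. q \<noteq> 0 \<and> mat_poly_eval n q A = 0\<^sub>m n n"
proof -
  define N where "N = n * n + 1"
  \<comment> \<open>\<open>n * n\<close> linear equations for the coefficients of \<open>A\<^sup>0, \<dots>, A\<^sup>n\<^sup>*\<^sup>n\<close>, one per entry \<open>(r div n, r mod n)\<close>\<close>
  obtain c where c: "c \<in> carrier_vec N" "c \<noteq> 0\<^sub>v N"
    and eqs: "\<And>r. r < n * n \<Longrightarrow> (\<Sum>k<N. (A ^\<^sub>m k) $$ (r div n, r mod n) * (c :: 'a vec) $ k) = 0"
    using underdetermined_system_has_nonzero_solution[of "n * n" N "\<lambda>r k. (A ^\<^sub>m k) $$ (r div n, r mod n)"]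
    unfolding N_def by auto
  define q where "q = (\<Sum>k<N. monom (c $ k) k)"
  have coeff_q: "coeff q k = (if k < N then c $ k else 0)" for k
    unfolding q_def by (simp add: coeff_sum coeff_monom)
  have "q \<noteq> 0"
  proof
    assume "q = 0"
    then have "c $ k = 0" if "k < N" for k using coeff_q[of k] that by simp
    then have "c = 0\<^sub>v N" using c(1) by (intro eq_vecI) auto
    with c(2) show False ..
  qed
  moreover have "degree q \<le> n * n"
    by (rule degree_le) (simp add: coeff_q N_def)
  then have "degree q < N" unfolding N_def by simp
  have "mat_poly_eval n q A = 0\<^sub>m n n"
  proof (rule eq_carrier_matI)
    fix i j assume ij: "i < n" "j < n"
    have "i * n + j < Suc i * n" using ij by simp
    also have "\<dots> \<le> n * n" using ij by (intro mult_le_mono1) simp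
    finally have "i * n + j < n * n" .
    moreover have "(i * n + j) div n = i" "(i * n + j) mod n = j" using ij by auto
    ultimately have "(\<Sum>k<N. (A ^\<^sub>m k) $$ (i, j) * c $ k) = 0"
      using eqs[of "i * n + j"] by simp
    then show "mat_poly_eval n q A $$ (i,j) = 0\<^sub>m n n $$ (i,j)"
      using index_mat_poly_eval[OF A \<open>degree q < N\<close> ij] ij by (simp add: coeff_q mult.commute)
  qed simp_all
  ultimately show ?thesis by blast
qed

lemma is_minimal_poly_unique:
  assumes "is_minimal_poly n A p" "is_minimal_poly n A q"
  shows "p = q"
proof (rule poly_dvd_antisym)
  show "p dvd q" "q dvd p" "coeff p (degree p) = coeff q (degree q)"
    using assms unfolding is_minimal_poly_def by simp_all
qed

lemma exists_minimal_poly: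
  fixes A :: "'a::field mat"
  assumes A: "A \<in> carrier_mat n n"
  shows "\<exists>p. is_minimal_poly n A p"
proof -
  obtain q0 where "q0 \<noteq> 0 \<and> mat_poly_eval n q0 A = 0\<^sub>m n n"
    using exists_annihilating_poly[OF A] by blast
  from ex_has_least_nat[of "\<lambda>q. q \<noteq> 0 \<and> mat_poly_eval n q A = 0\<^sub>m n n", OF this, of degree]
  obtain p0 where p0: "p0 \<noteq> 0" "mat_poly_eval n p0 A = 0\<^sub>m n n"
    and least: "\<And>q. q \<noteq> 0 \<Longrightarrow> mat_poly_eval n q A = 0\<^sub>m n n \<Longrightarrow> degree p0 \<le> degree q"
    by blast
  define p where "p = smult (inverse (lead_coeff p0)) p0"
  have monic: "lead_coeff p = 1" and "p \<noteq> 0" "degree p = degree p0"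
    using p0(1) by (simp_all add: p_def lead_coeff_smult)
  have annihilates: "mat_poly_eval n p A = 0\<^sub>m n n"
    using p0(2) by (simp add: p_def mat_poly_eval_smult[OF A])
  have "p dvd q" if q: "mat_poly_eval n q A = 0\<^sub>m n n" for q
  proof (rule ccontr)
    assume "\<not> p dvd q"
    then have "q mod p \<noteq> 0" and smaller: "degree (q mod p) < degree p0"
      using degree_mod_less_degree[OF \<open>p \<noteq> 0\<close>] \<open>degree p = degree p0\<close>
      by (simp_all add: mod_eq_0_iff_dvd)
    have "q mod p = q - q div p * p" by (simp add: minus_div_mult_eq_mod)
    also have "\<dots> = q + smult (-1) (p * (q div p))" by (simp add: mult.commute)
    finally have "mat_poly_eval n (q mod p) A
        = mat_poly_eval n q A + (-1) \<cdot>\<^sub>m mat_poly_eval n (p * (q div p)) A"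
      by (simp only: mat_poly_eval_add[OF A] mat_poly_eval_smult[OF A])
    also have "\<dots> = 0\<^sub>m n n" using q mat_poly_eval_mult_eq_0[OF A annihilates] by simp
    finally have "mat_poly_eval n (q mod p) A = 0\<^sub>m n n" .
    from least[OF \<open>q mod p \<noteq> 0\<close> this] smaller show False by simp
  qed
  then show ?thesis using monic annihilates unfolding is_minimal_poly_def by blast
qed

lemma is_minimal_poly_minimal_poly:
  assumes "A \<in> carrier_mat n n"
  shows "is_minimal_poly n A (minimal_poly n A)"
proof -
  obtain p where p: "is_minimal_poly n A p" using exists_minimal_poly[OF assms] ..
  then show ?thesis
    unfolding minimal_poly_def by (rule theI) (rule is_minimal_poly_unique[OF _ p])
qed

lemma monic_degree_2_poly_eq:
  fixes p :: "'a::comm_ring_1 poly"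
  assumes "degree p = 2" and "lead_coeff p = 1"
  shows "p = [:coeff p 0, coeff p 1, 1:]"
proof (rule poly_eqI)
  fix k :: nat
  consider "k = 0" | "k = 1" | "k = 2" | "k > 2" by linarith
  then show "coeff p k = coeff [:coeff p 0, coeff p 1, 1:] k"
    using assms by cases (simp_all add: numeral_2_eq_2 coeff_eq_0 coeff_pCons split: nat.split)
qed

lemma quadratic_relation_of_annihilator:
  fixes g :: "'a::field mat"
  assumes g: "g \<in> carrier_mat n n" and eval: "mat_poly_eval n [:-\<beta>, -\<alpha>, 1:] g = 0\<^sub>m n n"
  shows "g * g = \<alpha> \<cdot>\<^sub>m g + \<beta> \<cdot>\<^sub>m 1\<^sub>m n"
proof (rule eq_carrier_matI[of _ n n])
  fix i j assume ij: "i < n" "j < n"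
  let ?e = "1\<^sub>m n $$ (i,j)"
  from arg_cong[OF eval[unfolded mat_poly_eval_quadratic[OF g]], of "\<lambda>M. M $$ (i,j)"]
  have H: "0 = - (\<beta> * ?e) - \<alpha> * g $$ (i,j) + (g * g) $$ (i,j)"
    using ij g by (simp add: carrier_matD[OF g] del: index_mult_mat(1) index_one_mat(1))
  have "(g * g) $$ (i,j) = (- (\<beta> * ?e) - \<alpha> * g $$ (i,j) + (g * g) $$ (i,j)) + \<alpha> * g $$ (i,j) + \<beta> * ?e"
    by (simp add: algebra_simps)
  also have "\<dots> = (\<alpha> \<cdot>\<^sub>m g + \<beta> \<cdot>\<^sub>m 1\<^sub>m n) $$ (i,j)"
    unfolding H[symmetric] using ij g by (simp add: carrier_matD[OF g] del: index_one_mat(1))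
  finally show "(g * g) $$ (i,j) = (\<alpha> \<cdot>\<^sub>m g + \<beta> \<cdot>\<^sub>m 1\<^sub>m n) $$ (i,j)" .
qed (use g in simp_all)

lemma linear_annihilator_of_invertible:
  fixes g :: "'a::field mat"
  assumes g: "g \<in> carrier_mat n n" and "invertible_mat g" and gg: "g * g = \<alpha> \<cdot>\<^sub>m g"
  shows "mat_poly_eval n [:-\<alpha>, 1:] g = 0\<^sub>m n n"
proof -
  obtain B where B: "B \<in> carrier_mat n n" "B * g = 1\<^sub>m n"
    using invertible_mat_left_inverse[OF g \<open>invertible_mat g\<close>] .
  have "g = B * (g * g)" using B g by (simp add: assoc_mult_mat[symmetric])
  also have "\<dots> = \<alpha> \<cdot>\<^sub>m 1\<^sub>m n" using B g by (simp add: gg mult_smult_distrib)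
  finally have g_scalar: "g = \<alpha> \<cdot>\<^sub>m 1\<^sub>m n" .
  have "mat_poly_eval n [:-\<alpha>, 1:] g = -\<alpha> \<cdot>\<^sub>m 1\<^sub>m n + 1 \<cdot>\<^sub>m g + 0 \<cdot>\<^sub>m (g * g)"
    using mat_poly_eval_quadratic[OF g, of "-\<alpha>" 1 0] by simp
  also have "\<dots> = 0\<^sub>m n n"
  proof (rule eq_carrier_matI[of _ n n])
    fix i j assume ij: "i < n" "j < n"
    have "g $$ (i,j) = \<alpha> * 1\<^sub>m n $$ (i,j)"
      using arg_cong[OF g_scalar, of "\<lambda>M. M $$ (i,j)"] ij by (simp del: index_one_mat(1))
    then show "(-\<alpha> \<cdot>\<^sub>m 1\<^sub>m n + 1 \<cdot>\<^sub>m g + 0 \<cdot>\<^sub>m (g * g)) $$ (i,j) = 0\<^sub>m n n $$ (i,j)"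
      using ij g by (simp add: carrier_matD[OF g] del: index_mult_mat(1) index_one_mat(1))
  qed (use mult_carrier_mat[OF g g] in simp_all)
  finally show ?thesis .
qed

lemma quadratic_relation_of_minimal_poly:
  fixes g :: "'a::field mat"
  assumes g: "g \<in> carrier_mat n n" and "invertible_mat g"
    and d: "degree (minimal_poly n g) = 2"
  shows "\<exists>\<alpha> \<beta>. \<beta> \<noteq> 0 \<and> g * g = \<alpha> \<cdot>\<^sub>m g + \<beta> \<cdot>\<^sub>m 1\<^sub>m n"
proof -
  define p where "p = minimal_poly n g"
  have mp: "is_minimal_poly n g p" unfolding p_def by (rule is_minimal_poly_minimal_poly[OF g])
  define \<alpha> \<beta> where "\<alpha> = - coeff p 1" and "\<beta> = - coeff p 0"
  have "p = [:-\<beta>, -\<alpha>, 1:]"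
    using monic_degree_2_poly_eq[of p] d mp unfolding p_def[symmetric] \<alpha>_def \<beta>_def is_minimal_poly_def
    by simp
  then have rel: "g * g = \<alpha> \<cdot>\<^sub>m g + \<beta> \<cdot>\<^sub>m 1\<^sub>m n"
    using mp quadratic_relation_of_annihilator[OF g] unfolding is_minimal_poly_def by metis
  have "\<beta> \<noteq> 0"
  proof
    assume "\<beta> = 0"
    then have "g * g = \<alpha> \<cdot>\<^sub>m g" using rel g by (intro eq_carrier_matI[of _ n n]) simp_all
    then have "p dvd [:-\<alpha>, 1:]"
      using mp linear_annihilator_of_invertible[OF g \<open>invertible_mat g\<close>] unfolding is_minimal_poly_def by blast
    then show False using d dvd_imp_degree_le[of p "[:-\<alpha>, 1:]"] unfolding p_def by simp
  qed
  with rel show ?thesis by blast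
qed

section \<open>Matrices satisfying a quadratic relation\<close>

lemma quadratic_mult_mat_vec:
  fixes x :: "'a::field mat"
  assumes x: "x \<in> carrier_mat n n" and rel: "x * x = \<alpha> \<cdot>\<^sub>m x + \<beta> \<cdot>\<^sub>m 1\<^sub>m n"
    and w: "w \<in> carrier_vec n"
  shows "x *\<^sub>v (x *\<^sub>v w) = \<alpha> \<cdot>\<^sub>v (x *\<^sub>v w) + \<beta> \<cdot>\<^sub>v w"
proof -
  have "x *\<^sub>v (x *\<^sub>v w) = (\<alpha> \<cdot>\<^sub>m x + \<beta> \<cdot>\<^sub>m 1\<^sub>m n) *\<^sub>v w"
    using x w by (simp flip: rel)
  also have "\<dots> = \<alpha> \<cdot>\<^sub>v (x *\<^sub>v w) + \<beta> \<cdot>\<^sub>v w"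
    using x w by (simp add: add_mult_distrib_mat_vec[of _ n n] smult_mat_mult_vec[OF x w]
        smult_mat_mult_vec[OF one_carrier_mat w] one_mult_mat_vec[OF w])
  finally show ?thesis .
qed

lemma quadratic_mat_inverse:
  fixes x :: "'a::field mat"
  assumes x: "x \<in> carrier_mat n n" and rel: "x * x = \<alpha> \<cdot>\<^sub>m x + \<beta> \<cdot>\<^sub>m 1\<^sub>m n" and "\<beta> \<noteq> 0"
  shows "x * (inverse \<beta> \<cdot>\<^sub>m (x - \<alpha> \<cdot>\<^sub>m 1\<^sub>m n)) = 1\<^sub>m n"
    and "(inverse \<beta> \<cdot>\<^sub>m (x - \<alpha> \<cdot>\<^sub>m 1\<^sub>m n)) * x = 1\<^sub>m n"
proof -
  have "x * x - \<alpha> \<cdot>\<^sub>m x = \<beta> \<cdot>\<^sub>m 1\<^sub>m n"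
    unfolding rel by (rule eq_carrier_matI[of _ n n]) (use x in \<open>simp_all add: minus_carrier_mat\<close>)
  then have right: "x * (x - \<alpha> \<cdot>\<^sub>m 1\<^sub>m n) = \<beta> \<cdot>\<^sub>m 1\<^sub>m n"
    and left: "(x - \<alpha> \<cdot>\<^sub>m 1\<^sub>m n) * x = \<beta> \<cdot>\<^sub>m 1\<^sub>m n"
    using x by (simp_all add: mult_minus_distrib_mat[of _ n n] minus_mult_distrib_mat[of _ n n]
        mult_smult_distrib[OF x one_carrier_mat] mult_smult_assoc_mat[OF one_carrier_mat x])
  have inv: "inverse \<beta> \<cdot>\<^sub>m (\<beta> \<cdot>\<^sub>m 1\<^sub>m n) = (1\<^sub>m n :: 'a mat)"
    using \<open>\<beta> \<noteq> 0\<close> by (intro eq_carrier_matI[of _ n n]) simp_all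
  have x_minus: "x - \<alpha> \<cdot>\<^sub>m 1\<^sub>m n \<in> carrier_mat n n" by (simp add: minus_carrier_mat)
  show "x * (inverse \<beta> \<cdot>\<^sub>m (x - \<alpha> \<cdot>\<^sub>m 1\<^sub>m n)) = 1\<^sub>m n"
    using right inv by (simp add: mult_smult_distrib[OF x x_minus])
  show "(inverse \<beta> \<cdot>\<^sub>m (x - \<alpha> \<cdot>\<^sub>m 1\<^sub>m n)) * x = 1\<^sub>m n"
    using left inv by (simp add: mult_smult_assoc_mat[OF x_minus x])
qed

lemma quadratic_mat_inverse_preserves:
  fixes x :: "'a::field mat"
  assumes x: "x \<in> carrier_mat n n" and rel: "x * x = \<alpha> \<cdot>\<^sub>m x + \<beta> \<cdot>\<^sub>m 1\<^sub>m n" and "\<beta> \<noteq> 0"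
    and W: "is_subspace n W" and x_W: "\<And>w. w \<in> W \<Longrightarrow> x *\<^sub>v w \<in> W"
  shows "\<exists>h \<in> carrier_mat n n. x * h = 1\<^sub>m n \<and> h * x = 1\<^sub>m n \<and> (\<forall>w\<in>W. h *\<^sub>v w \<in> W)"
proof (intro bexI conjI ballI)
  let ?h = "inverse \<beta> \<cdot>\<^sub>m (x - \<alpha> \<cdot>\<^sub>m 1\<^sub>m n)"
  show "?h \<in> carrier_mat n n" by (simp add: minus_carrier_mat)
  show "x * ?h = 1\<^sub>m n" "?h * x = 1\<^sub>m n" using quadratic_mat_inverse[OF x rel \<open>\<beta> \<noteq> 0\<close>] by simp_all
  fix w assume w: "w \<in> W"
  then have wc: "w \<in> carrier_vec n" using W unfolding is_subspace_def by blast
  have "?h *\<^sub>v w = inverse \<beta> \<cdot>\<^sub>v (x *\<^sub>v w - (\<alpha> \<cdot>\<^sub>m 1\<^sub>m n) *\<^sub>v w)"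
    using x wc by (simp add: smult_mat_mult_vec[OF minus_carrier_mat[OF smult_carrier_mat[OF one_carrier_mat]] wc]
        minus_mult_distrib_mat_vec[OF x smult_carrier_mat[OF one_carrier_mat] wc])
  also have "\<dots> = inverse \<beta> \<cdot>\<^sub>v (x *\<^sub>v w + (- \<alpha>) \<cdot>\<^sub>v w)"
    using x wc by (intro arg_cong[of _ _ "\<lambda>v. inverse \<beta> \<cdot>\<^sub>v v"] eq_vecI)
      (simp_all add: smult_mat_mult_vec[OF one_carrier_mat wc])
  also have "\<dots> \<in> W" using W x_W w unfolding is_subspace_def by blast
  finally show "?h *\<^sub>v w \<in> W" .
qed

lemma quadratic_commutes_with_anticommutator:
  fixes x y :: "'a::field mat"
  assumes x: "x \<in> carrier_mat n n" and y: "y \<in> carrier_mat n n"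
    and rel: "x * x = \<alpha> \<cdot>\<^sub>m x + \<beta> \<cdot>\<^sub>m 1\<^sub>m n"
  shows "(x * y + y * x - \<alpha> \<cdot>\<^sub>m y) * x = x * (x * y + y * x - \<alpha> \<cdot>\<^sub>m y)"
proof -
  have xxy: "x * (x * y) = \<alpha> \<cdot>\<^sub>m (x * y) + \<beta> \<cdot>\<^sub>m y"
    using x y by (simp add: assoc_mult_mat[symmetric, of x n n x n y n] rel
        add_mult_distrib_mat[of _ n n] mult_smult_assoc_mat[of _ n n])
  have yxx: "y * x * x = \<alpha> \<cdot>\<^sub>m (y * x) + \<beta> \<cdot>\<^sub>m y"
    using x y by (simp add: assoc_mult_mat[of y n n x n x n] rel
        mult_add_distrib_mat[OF y smult_carrier_mat[OF x] smult_carrier_mat[OF one_carrier_mat]]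
        mult_smult_distrib[OF y x] mult_smult_distrib[OF y one_carrier_mat] right_mult_one_mat[OF y])
  have "(x * y + y * x - \<alpha> \<cdot>\<^sub>m y) * x = x * y * x + y * x * x - \<alpha> \<cdot>\<^sub>m (y * x)"
    using x y by (simp add: add_mult_distrib_mat[of _ n n] minus_mult_distrib_mat[of _ n n]
        mult_smult_assoc_mat[of _ n n])
  also have "\<dots> = x * (y * x) + (\<alpha> \<cdot>\<^sub>m (y * x) + \<beta> \<cdot>\<^sub>m y) - \<alpha> \<cdot>\<^sub>m (y * x)"
    using x y by (simp add: yxx assoc_mult_mat[of x n n y n x n])
  also have "\<dots> = (\<alpha> \<cdot>\<^sub>m (x * y) + \<beta> \<cdot>\<^sub>m y) + x * (y * x) - \<alpha> \<cdot>\<^sub>m (x * y)"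
    by (rule eq_carrier_matI[of _ n n])
      (use x y in \<open>simp_all add: minus_carrier_mat algebra_simps del: index_mult_mat(1)\<close>)
  also have "\<dots> = x * (x * y) + x * (y * x) - \<alpha> \<cdot>\<^sub>m (x * y)"
    by (simp add: xxy)
  also have "\<dots> = x * (x * y + y * x - \<alpha> \<cdot>\<^sub>m y)"
    using x y by (simp add: mult_add_distrib_mat[OF x mult_carrier_mat[OF x y] mult_carrier_mat[OF y x]]
        mult_minus_distrib_mat[OF x add_carrier_mat[OF mult_carrier_mat[OF y x]] smult_carrier_mat[OF y]]
        mult_smult_distrib[OF x y])
  finally show ?thesis .
qed

lemma map_mat_quadratic_relation:
  fixes h :: "'a::field \<Rightarrow> 'b::field"
  assumes "semiring_hom h" and g: "g \<in> carrier_mat n n" and rel: "g * g = \<alpha> \<cdot>\<^sub>m g + \<beta> \<cdot>\<^sub>m 1\<^sub>m n"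
  shows "map_mat h g * map_mat h g = h \<alpha> \<cdot>\<^sub>m map_mat h g + h \<beta> \<cdot>\<^sub>m 1\<^sub>m n"
proof -
  interpret semiring_hom h by fact
  have "map_mat h g * map_mat h g = map_mat h (\<alpha> \<cdot>\<^sub>m g + \<beta> \<cdot>\<^sub>m 1\<^sub>m n)"
    unfolding rel[symmetric] by (rule mat_hom_mult[OF g g, symmetric])
  also have "\<dots> = h \<alpha> \<cdot>\<^sub>m map_mat h g + h \<beta> \<cdot>\<^sub>m 1\<^sub>m n"
    by (rule eq_carrier_matI[of _ n n]) (use g in \<open>auto simp: hom_add hom_mult\<close>)
  finally show ?thesis .
qed

text \<open>The \<open>3 \<times> 3\<close> identity does not factor through a \<open>3 \<times> 2\<close> matrix: the \<open>2 \<times> 2\<close>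
  minors of the factor would all vanish.\<close>

lemma identity3_not_rank2:
  fixes a0 a1 a2 b0 b1 b2 v0 v1 v2 u0 u1 u2 :: "'a::field"
  assumes "a0 * v0 + b0 * u0 = 1" "a0 * v1 + b0 * u1 = 0" "a0 * v2 + b0 * u2 = 0"
    and "a1 * v0 + b1 * u0 = 0" "a1 * v1 + b1 * u1 = 1" "a1 * v2 + b1 * u2 = 0"
    and "a2 * v2 + b2 * u2 = 1"
  shows False
proof -
  let ?d = "a0 * b1 - a1 * b0"
  have "(a1 * b2 - a2 * b1) * (a0 * v2 + b0 * u2) - (a0 * b2 - a2 * b0) * (a1 * v2 + b1 * u2)
      + ?d * (a2 * v2 + b2 * u2) = 0"
    by (simp add: algebra_simps)
  then have "?d = 0" using assms by simp
  have "b1 * (a0 * v0 + b0 * u0) - b0 * (a1 * v0 + b1 * u0) = ?d * v0"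
    and "a1 * (a0 * v1 + b0 * u1) - a0 * (a1 * v1 + b1 * u1) = - ?d * u1"
    and "b0 * (a1 * v1 + b1 * u1) - b1 * (a0 * v1 + b0 * u1) = - ?d * v1"
    by (simp_all add: algebra_simps)
  then have "b1 = 0" "a0 = 0" "b0 = 0"
    unfolding assms(1,2,4,5) \<open>?d = 0\<close> by simp_all
  then show False using assms(1) by simp
qed

definition span2 :: "'a::field vec \<Rightarrow> 'a vec \<Rightarrow> 'a vec set" where
  "span2 v u = {a \<cdot>\<^sub>v v + b \<cdot>\<^sub>v u | a b. True}"

lemma span2_memI: "w = a \<cdot>\<^sub>v v + b \<cdot>\<^sub>v u \<Longrightarrow> w \<in> span2 v u"
  unfolding span2_def by blast

lemma left_mem_span2: "v \<in> carrier_vec n \<Longrightarrow> u \<in> carrier_vec n \<Longrightarrow> v \<in> span2 v u"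
  by (rule span2_memI[of _ 1 _ 0]) auto

lemma right_mem_span2: "v \<in> carrier_vec n \<Longrightarrow> u \<in> carrier_vec n \<Longrightarrow> u \<in> span2 v u"
  by (rule span2_memI[of _ 0 _ 1]) auto

lemma span2_subspace:
  assumes v: "v \<in> carrier_vec n" and u: "u \<in> carrier_vec n"
  shows "is_subspace n (span2 v u)"
  unfolding is_subspace_def
proof (intro conjI ballI allI)
  show "span2 v u \<subseteq> carrier_vec n" using v u by (auto simp: span2_def)
  show "0\<^sub>v n \<in> span2 v u" by (rule span2_memI[of _ 0 _ 0]) (use v u in auto)
next
  fix w w' assume "w \<in> span2 v u" "w' \<in> span2 v u"
  then obtain a b a' b' where "w = a \<cdot>\<^sub>v v + b \<cdot>\<^sub>v u" "w' = a' \<cdot>\<^sub>v v + b' \<cdot>\<^sub>v u"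
    unfolding span2_def by blast
  then show "w + w' \<in> span2 v u"
    by (intro span2_memI[of _ "a + a'" _ "b + b'"] eq_vecI) (use v u in \<open>auto simp: algebra_simps\<close>)
next
  fix c w assume "w \<in> span2 v u"
  then obtain a b where "w = a \<cdot>\<^sub>v v + b \<cdot>\<^sub>v u" unfolding span2_def by blast
  then show "c \<cdot>\<^sub>v w \<in> span2 v u"
    by (intro span2_memI[of _ "c * a" _ "c * b"] eq_vecI) (use v u in \<open>auto simp: algebra_simps\<close>)
qed

lemma span2_mult_mat_vec:
  assumes A: "A \<in> carrier_mat n n" and v: "v \<in> carrier_vec n" and u: "u \<in> carrier_vec n"
    and "A *\<^sub>v v \<in> span2 v u" "A *\<^sub>v u \<in> span2 v u" and "w \<in> span2 v u"
  shows "A *\<^sub>v w \<in> span2 v u"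
proof -
  obtain a b where w: "w = a \<cdot>\<^sub>v v + b \<cdot>\<^sub>v u" using \<open>w \<in> span2 v u\<close> unfolding span2_def by blast
  have "A *\<^sub>v w = a \<cdot>\<^sub>v (A *\<^sub>v v) + b \<cdot>\<^sub>v (A *\<^sub>v u)"
    unfolding w using A v u by (simp add: mult_add_distrib_mat_vec[of _ n n] mult_mat_vec)
  also have "\<dots> \<in> span2 v u"
    using span2_subspace[OF v u] assms(4,5) unfolding is_subspace_def by blast
  finally show ?thesis .
qed

lemma span2_neq_carrier_vec:
  fixes v u :: "'a::field vec"
  assumes n: "n \<ge> 3" and v: "v \<in> carrier_vec n" and u: "u \<in> carrier_vec n"
  shows "span2 v u \<noteq> carrier_vec n"
proof
  assume full: "span2 v u = carrier_vec n"
  have "\<exists>a b. a * v $ 0 + b * u $ 0 = (if k = 0 then 1 else 0) \<and>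
      a * v $ 1 + b * u $ 1 = (if k = 1 then 1 else 0) \<and> a * v $ 2 + b * u $ 2 = (if k = 2 then 1 else 0)"
    if k: "k < 3" for k :: nat
  proof -
    have "unit_vec n k \<in> span2 v u" using full k n by simp
    then obtain a b where ab: "unit_vec n k = a \<cdot>\<^sub>v v + b \<cdot>\<^sub>v u" unfolding span2_def by blast
    have entry: "a * v $ i + b * u $ i = (if k = i then 1 else 0)" if "i < 3" for i
    proof -
      have "i < n" "k < n" using that k n by simp_all
      then show ?thesis using arg_cong[OF ab, of "\<lambda>w :: 'a vec. w $ i"] v u by auto
    qed
    show ?thesis
      by (intro exI[of _ a] exI[of _ b]) (use entry[of 0] entry[of 1] entry[of 2] in simp)
  qed
  note unit = this
  obtain a0 b0 where "a0 * v $ 0 + b0 * u $ 0 = 1" "a0 * v $ 1 + b0 * u $ 1 = 0"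
    "a0 * v $ 2 + b0 * u $ 2 = 0"
    using unit[of 0] by auto
  moreover obtain a1 b1 where "a1 * v $ 0 + b1 * u $ 0 = 0" "a1 * v $ 1 + b1 * u $ 1 = 1"
    "a1 * v $ 2 + b1 * u $ 2 = 0"
    using unit[of 1] by auto
  moreover obtain a2 b2 where "a2 * v $ 2 + b2 * u $ 2 = 1"
    using unit[of 2] by auto
  ultimately show False by (rule identity3_not_rank2)
qed

section \<open>A common invariant plane over an algebraically closed field\<close>

lemma exists_eigenvector:
  fixes A :: "'a::alg_closed_field mat"
  assumes A: "A \<in> carrier_mat n n" and "n > 0"
  obtains v \<mu> where "v \<in> carrier_vec n" "v \<noteq> 0\<^sub>v n" "A *\<^sub>v v = \<mu> \<cdot>\<^sub>v v"
proof -
  have "degree (char_poly A) = n" using degree_monic_char_poly[OF A] by simp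
  then obtain \<mu> where "poly (char_poly A) \<mu> = 0"
    using \<open>n > 0\<close> alg_closed_imp_poly_has_root by force
  then have "eigenvalue A \<mu>" using eigenvalue_root_char_poly[OF A] by simp
  then obtain v where "eigenvector A v \<mu>" unfolding eigenvalue_def by blast
  then show thesis using that A unfolding eigenvector_def by auto
qed

lemma quadratic_root_eigenvector:
  fixes x :: "'a::field mat"
  assumes x: "x \<in> carrier_mat n n" and rel: "x * x = \<alpha> \<cdot>\<^sub>m x + \<beta> \<cdot>\<^sub>m 1\<^sub>m n"
    and root: "poly [:-\<beta>, -\<alpha>, 1:] \<rho> = 0" and w: "w \<in> carrier_vec n"
  shows "x *\<^sub>v (x *\<^sub>v w - (\<alpha> - \<rho>) \<cdot>\<^sub>v w) = \<rho> \<cdot>\<^sub>v (x *\<^sub>v w - (\<alpha> - \<rho>) \<cdot>\<^sub>v w)"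
proof -
  have \<beta>: "\<beta> = - \<rho> * (\<alpha> - \<rho>)" using root by (simp add: algebra_simps)
  have "x *\<^sub>v (x *\<^sub>v w - (\<alpha> - \<rho>) \<cdot>\<^sub>v w) = (\<alpha> \<cdot>\<^sub>v (x *\<^sub>v w) + \<beta> \<cdot>\<^sub>v w) - (\<alpha> - \<rho>) \<cdot>\<^sub>v (x *\<^sub>v w)"
    using x w by (simp add: mult_minus_distrib_mat_vec[of _ n n] mult_mat_vec quadratic_mult_mat_vec[OF x rel])
  also have "\<dots> = \<rho> \<cdot>\<^sub>v (x *\<^sub>v w - (\<alpha> - \<rho>) \<cdot>\<^sub>v w)"
    by (rule eq_vecI) (use x w in \<open>simp_all add: \<beta> algebra_simps\<close>)
  finally show ?thesis .
qed

lemma common_eigenvector_of_quadratic: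
  fixes x z :: "'a::alg_closed_field mat"
  assumes x: "x \<in> carrier_mat n n" and z: "z \<in> carrier_mat n n" and "n > 0"
    and rel: "x * x = \<alpha> \<cdot>\<^sub>m x + \<beta> \<cdot>\<^sub>m 1\<^sub>m n" and comm: "z * x = x * z"
  obtains v \<theta> \<mu> where "v \<in> carrier_vec n" "v \<noteq> 0\<^sub>v n" "x *\<^sub>v v = \<theta> \<cdot>\<^sub>v v" "z *\<^sub>v v = \<mu> \<cdot>\<^sub>v v"
proof -
  obtain w \<mu> where w: "w \<in> carrier_vec n" "w \<noteq> 0\<^sub>v n" and zw: "z *\<^sub>v w = \<mu> \<cdot>\<^sub>v w"
    using exists_eigenvector[OF z \<open>n > 0\<close>] .
  obtain \<rho> where root: "poly [:-\<beta>, -\<alpha>, 1:] \<rho> = 0"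
    using alg_closed_imp_poly_has_root[of "[:-\<beta>, -\<alpha>, 1:]"] by auto
  define u where "u = x *\<^sub>v w - (\<alpha> - \<rho>) \<cdot>\<^sub>v w"
  have u: "u \<in> carrier_vec n" unfolding u_def using x w by simp
  have xu: "x *\<^sub>v u = \<rho> \<cdot>\<^sub>v u" unfolding u_def by (rule quadratic_root_eigenvector[OF x rel root w(1)])
  have "z *\<^sub>v (x *\<^sub>v w) = x *\<^sub>v (z *\<^sub>v w)"
    using arg_cong[OF comm, of "\<lambda>M. M *\<^sub>v w"] x z w by simp
  then have "z *\<^sub>v u = x *\<^sub>v (\<mu> \<cdot>\<^sub>v w) - (\<alpha> - \<rho>) \<cdot>\<^sub>v (\<mu> \<cdot>\<^sub>v w)"
    unfolding u_def zw[symmetric] using x z w by (simp add: mult_minus_distrib_mat_vec[of _ n n] mult_mat_vec)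
  also have "\<dots> = \<mu> \<cdot>\<^sub>v u"
    unfolding u_def by (rule eq_vecI) (use x w in \<open>simp_all add: mult_mat_vec algebra_simps\<close>)
  finally have zu: "z *\<^sub>v u = \<mu> \<cdot>\<^sub>v u" .
  show thesis
  proof (cases "u = 0\<^sub>v n")
    case True
    have "x *\<^sub>v w = (\<alpha> - \<rho>) \<cdot>\<^sub>v w"
    proof (rule eq_vecI)
      fix i assume "i < dim_vec ((\<alpha> - \<rho>) \<cdot>\<^sub>v w)"
      then show "(x *\<^sub>v w) $ i = ((\<alpha> - \<rho>) \<cdot>\<^sub>v w) $ i"
        using arg_cong[OF True[unfolded u_def], of "\<lambda>v :: 'a vec. v $ i"] x w by simp
    qed (use x w in simp)
    from that[OF w this zw] show thesis .
  next
    case False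
    from that[OF u False xu zu] show thesis .
  qed
qed

lemma quadratic_pair_invariant_plane:
  fixes x y :: "'a::alg_closed_field mat"
  assumes x: "x \<in> carrier_mat n n" and y: "y \<in> carrier_mat n n" and "n > 0"
    and rel_x: "x * x = \<alpha> \<cdot>\<^sub>m x + \<beta> \<cdot>\<^sub>m 1\<^sub>m n" and rel_y: "y * y = \<gamma> \<cdot>\<^sub>m y + \<delta> \<cdot>\<^sub>m 1\<^sub>m n"
  obtains v where "v \<in> carrier_vec n" "v \<noteq> 0\<^sub>v n"
    "\<And>w. w \<in> span2 v (y *\<^sub>v v) \<Longrightarrow> x *\<^sub>v w \<in> span2 v (y *\<^sub>v v)"
    "\<And>w. w \<in> span2 v (y *\<^sub>v v) \<Longrightarrow> y *\<^sub>v w \<in> span2 v (y *\<^sub>v v)"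
proof -
  define z where "z = x * y + y * x - \<alpha> \<cdot>\<^sub>m y"
  have z: "z \<in> carrier_mat n n" unfolding z_def using x y by (simp add: minus_carrier_mat)
  obtain v \<theta> \<mu> where v: "v \<in> carrier_vec n" "v \<noteq> 0\<^sub>v n"
    and xv: "x *\<^sub>v v = \<theta> \<cdot>\<^sub>v v" and zv: "z *\<^sub>v v = \<mu> \<cdot>\<^sub>v v"
    using common_eigenvector_of_quadratic[OF x z \<open>n > 0\<close> rel_x
        quadratic_commutes_with_anticommutator[OF x y rel_x, folded z_def]] .
  define u where "u = y *\<^sub>v v"
  have u: "u \<in> carrier_vec n" unfolding u_def using y v by simp
  have H: "\<mu> \<cdot>\<^sub>v v = x *\<^sub>v u + \<theta> \<cdot>\<^sub>v u - \<alpha> \<cdot>\<^sub>v u"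
    unfolding zv[symmetric] z_def u_def using x y v
    by (simp add: minus_mult_distrib_mat_vec[of _ n n] add_mult_distrib_mat_vec[of _ n n]
        smult_mat_mult_vec[OF y v(1)] xv mult_mat_vec)
  have "x *\<^sub>v u = (x *\<^sub>v u + \<theta> \<cdot>\<^sub>v u - \<alpha> \<cdot>\<^sub>v u) + (\<alpha> - \<theta>) \<cdot>\<^sub>v u"
    by (intro eq_vecI) (use x u in \<open>simp_all add: algebra_simps\<close>)
  also have "\<dots> = \<mu> \<cdot>\<^sub>v v + (\<alpha> - \<theta>) \<cdot>\<^sub>v u" by (simp only: H)
  finally have "x *\<^sub>v u \<in> span2 v u" by (rule span2_memI)
  moreover have "x *\<^sub>v v \<in> span2 v u" using xv v u by (intro span2_memI[of _ \<theta> _ 0]) auto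
  moreover have "y *\<^sub>v u = \<delta> \<cdot>\<^sub>v v + \<gamma> \<cdot>\<^sub>v u"
    unfolding u_def quadratic_mult_mat_vec[OF y rel_y v(1)] using y v by (intro comm_add_vec[of _ n]) simp_all
  then have "y *\<^sub>v u \<in> span2 v u" by (rule span2_memI)
  moreover have "y *\<^sub>v v \<in> span2 v u" unfolding u_def by (rule right_mem_span2[OF v(1)]) (use y v in simp)
  ultimately show thesis
    using that[OF v] span2_mult_mat_vec[OF x v(1) u] span2_mult_mat_vec[OF y v(1) u]
    unfolding u_def by blast
qed

section \<open>Subspaces invariant under a generated group\<close>

lemma gen_group_carrier:
  assumes "S \<subseteq> carrier_mat n n" and "A \<in> gen_group n S"
  shows "A \<in> carrier_mat n n"
  using assms(2) by induction (use assms(1) in auto)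

lemma mult_mat_preserves:
  assumes "W \<subseteq> carrier_vec n" and "C \<in> carrier_mat n n" "D \<in> carrier_mat n n"
    and "\<forall>w\<in>W. C *\<^sub>v w \<in> W" "\<forall>w\<in>W. D *\<^sub>v w \<in> W"
  shows "\<forall>w\<in>W. (C * D) *\<^sub>v w \<in> W"
  using assms by (auto simp: assoc_mult_mat_vec[OF assms(2,3)] subsetD)

lemma gen_group_preserves_subspace:
  fixes S :: "'a::field mat set"
  assumes W: "is_subspace n W"
    and gens: "\<And>g. g \<in> S \<Longrightarrow> g \<in> carrier_mat n n \<and> (\<forall>w\<in>W. g *\<^sub>v w \<in> W) \<and>
      (\<exists>h \<in> carrier_mat n n. g * h = 1\<^sub>m n \<and> h * g = 1\<^sub>m n \<and> (\<forall>w\<in>W. h *\<^sub>v w \<in> W))"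
    and "A \<in> gen_group n S" and "w \<in> W"
  shows "A *\<^sub>v w \<in> W"
proof -
  have Wc: "W \<subseteq> carrier_vec n" using W unfolding is_subspace_def by blast
  \<comment> \<open>the induction carries an inverse preserving \<open>W\<close> along, since \<open>gen_inv\<close> may invert any element\<close>
  have "A \<in> carrier_mat n n \<and> (\<forall>w\<in>W. A *\<^sub>v w \<in> W) \<and>
      (\<exists>h \<in> carrier_mat n n. A * h = 1\<^sub>m n \<and> h * A = 1\<^sub>m n \<and> (\<forall>w\<in>W. h *\<^sub>v w \<in> W))"
    using \<open>A \<in> gen_group n S\<close>
  proof induction
    case gen_one
    have "\<forall>w\<in>W. 1\<^sub>m n *\<^sub>v w \<in> W" using Wc by auto
    then show ?case by (intro conjI bexI[of _ "1\<^sub>m n"]) auto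
  next
    case (gen_base g)
    then show ?case by (rule gens)
  next
    case (gen_mult A B)
    from gen_mult.IH obtain hA hB where A: "A \<in> carrier_mat n n" "\<forall>w\<in>W. A *\<^sub>v w \<in> W"
      and hA: "hA \<in> carrier_mat n n" "A * hA = 1\<^sub>m n" "hA * A = 1\<^sub>m n" "\<forall>w\<in>W. hA *\<^sub>v w \<in> W"
      and B: "B \<in> carrier_mat n n" "\<forall>w\<in>W. B *\<^sub>v w \<in> W"
      and hB: "hB \<in> carrier_mat n n" "B * hB = 1\<^sub>m n" "hB * B = 1\<^sub>m n" "\<forall>w\<in>W. hB *\<^sub>v w \<in> W"
      by blast
    show ?case
    proof (intro conjI bexI)
      show "A * B \<in> carrier_mat n n" "hB * hA \<in> carrier_mat n n"
        using A(1) B(1) hA(1) hB(1) by (simp_all add: mult_carrier_mat[of _ n n _ n])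
      show "\<forall>w\<in>W. (A * B) *\<^sub>v w \<in> W" "\<forall>w\<in>W. (hB * hA) *\<^sub>v w \<in> W"
        using mult_mat_preserves[OF Wc] A B hA hB by simp_all
      show "(A * B) * (hB * hA) = 1\<^sub>m n" "(hB * hA) * (A * B) = 1\<^sub>m n"
        using mult_mat_inverse[OF A(1) B(1) hA(1) hB(1) hA(2) hB(2)]
          mult_mat_inverse[OF hB(1) hA(1) B(1) A(1) hB(3) hA(3)] by simp_all
    qed
  next
    case (gen_inv A B)
    from gen_inv.IH obtain hA where A: "A \<in> carrier_mat n n" "\<forall>w\<in>W. A *\<^sub>v w \<in> W"
      and hA: "hA \<in> carrier_mat n n" "A * hA = 1\<^sub>m n" "hA * A = 1\<^sub>m n" "\<forall>w\<in>W. hA *\<^sub>v w \<in> W"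
      by blast
    have "B = hA" using right_inverse_unique_mat[OF A(1) gen_inv.hyps(2) hA(1) hA(3) gen_inv.hyps(3)] .
    then show ?case using A hA gen_inv.hyps(3) by blast
  qed
  then show ?thesis using \<open>w \<in> W\<close> by blast
qed

lemma map_mat_gen_group:
  fixes h :: "'a::field \<Rightarrow> 'b::field"
  assumes "semiring_hom h" and S: "S \<subseteq> carrier_mat n n"
  shows "map_mat h ` gen_group n S \<subseteq> gen_group n (map_mat h ` S)"
proof
  interpret semiring_hom h by fact
  fix M assume "M \<in> map_mat h ` gen_group n S"
  then obtain A where "A \<in> gen_group n S" and M: "M = map_mat h A" by blast
  have "map_mat h A \<in> gen_group n (map_mat h ` S)"
    using \<open>A \<in> gen_group n S\<close>
  proof induction
    case gen_one
    then show ?case using gen_group.gen_one by (simp add: mat_hom_one)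
  next
    case (gen_base A)
    then show ?case by (simp add: gen_group.gen_base)
  next
    case (gen_mult A B)
    then have "map_mat h (A * B) = map_mat h A * map_mat h B"
      using gen_group_carrier[OF S] by (intro mat_hom_mult) auto
    then show ?case using gen_mult.IH by (simp add: gen_group.gen_mult)
  next
    case (gen_inv A B)
    then have "map_mat h A * map_mat h B = map_mat h (1\<^sub>m n)"
      using gen_group_carrier[OF S] by (metis mat_hom_mult)
    then have "map_mat h A * map_mat h B = 1\<^sub>m n" by (simp add: mat_hom_one)
    then show ?case using gen_inv gen_group.gen_inv[of "map_mat h A"] by simp
  qed
  then show "M \<in> gen_group n (map_mat h ` S)" unfolding M .
qed

lemma acts_irreducibly_mono:
  assumes "acts_irreducibly n G" and "G \<subseteq> H"
  shows "acts_irreducibly n H"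
  using assms unfolding acts_irreducibly_def by blast

lemma quadratic_pair_not_irreducible:
  fixes x y :: "'a::alg_closed_field mat"
  assumes "n \<ge> 3" and x: "x \<in> carrier_mat n n" and y: "y \<in> carrier_mat n n"
    and rel_x: "x * x = \<alpha> \<cdot>\<^sub>m x + \<beta> \<cdot>\<^sub>m 1\<^sub>m n" "\<beta> \<noteq> 0"
    and rel_y: "y * y = \<gamma> \<cdot>\<^sub>m y + \<delta> \<cdot>\<^sub>m 1\<^sub>m n" "\<delta> \<noteq> 0"
  shows "\<not> acts_irreducibly n (gen_group n {x, y})"
proof
  assume irreducible: "acts_irreducibly n (gen_group n {x, y})"
  have "n > 0" using \<open>n \<ge> 3\<close> by simp
  obtain v where v: "v \<in> carrier_vec n" "v \<noteq> 0\<^sub>v n"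
    and x_W: "\<And>w. w \<in> span2 v (y *\<^sub>v v) \<Longrightarrow> x *\<^sub>v w \<in> span2 v (y *\<^sub>v v)"
    and y_W: "\<And>w. w \<in> span2 v (y *\<^sub>v v) \<Longrightarrow> y *\<^sub>v w \<in> span2 v (y *\<^sub>v v)"
    using quadratic_pair_invariant_plane[OF x y \<open>n > 0\<close> rel_x(1) rel_y(1)] by blast
  define W where "W = span2 v (y *\<^sub>v v)"
  have yv: "y *\<^sub>v v \<in> carrier_vec n" using y v by simp
  have W: "is_subspace n W" unfolding W_def using span2_subspace[OF v(1) yv] .
  have x_W': "\<forall>w\<in>W. x *\<^sub>v w \<in> W" and y_W': "\<forall>w\<in>W. y *\<^sub>v w \<in> W"
    using x_W y_W unfolding W_def by blast+
  have "g \<in> carrier_mat n n \<and> (\<forall>w\<in>W. g *\<^sub>v w \<in> W) \<and>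
      (\<exists>h \<in> carrier_mat n n. g * h = 1\<^sub>m n \<and> h * g = 1\<^sub>m n \<and> (\<forall>w\<in>W. h *\<^sub>v w \<in> W))"
    if "g \<in> {x, y}" for g
  proof -
    have "g = x \<or> g = y" using that by simp
    then show ?thesis
      using x y x_W' y_W' quadratic_mat_inverse_preserves[OF x rel_x W x_W[folded W_def]]
        quadratic_mat_inverse_preserves[OF y rel_y W y_W[folded W_def]] by blast
  qed
  then have "\<forall>A\<in>gen_group n {x, y}. \<forall>w\<in>W. A *\<^sub>v w \<in> W"
    using gen_group_preserves_subspace[OF W] by blast
  then have "W = {0\<^sub>v n} \<or> W = carrier_vec n"
    using irreducible W unfolding acts_irreducibly_def by blast
  moreover have "v \<in> W" unfolding W_def by (rule left_mem_span2[OF v(1) yv])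
  ultimately show False
    using v(2) span2_neq_carrier_vec[OF \<open>n \<ge> 3\<close> v(1) yv] unfolding W_def by blast
qed

theorem mainTheorem11:
  fixes g1 g2 :: "'a::field mat" and n :: nat
  assumes "n \<ge> 4"
    and "g1 \<in> carrier_mat n n" and "invertible_mat g1"
    and "g2 \<in> carrier_mat n n" and "invertible_mat g2"
    and "degree (minimal_poly n g1) = 2"
    and "degree (minimal_poly n g2) = 2"
  shows "\<not> acts_absolutely_irreducibly n (gen_group n {g1, g2})"
proof
  assume "acts_absolutely_irreducibly n (gen_group n {g1, g2})"
  then have irreducible: "acts_irreducibly n (map_mat to_ac ` gen_group n {g1, g2})"
    unfolding acts_absolutely_irreducibly_def .
  obtain \<alpha>1 \<beta>1 where rel1: "\<beta>1 \<noteq> 0" "g1 * g1 = \<alpha>1 \<cdot>\<^sub>m g1 + \<beta>1 \<cdot>\<^sub>m 1\<^sub>m n"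
    using quadratic_relation_of_minimal_poly[OF assms(2,3,6)] by blast
  obtain \<alpha>2 \<beta>2 where rel2: "\<beta>2 \<noteq> 0" "g2 * g2 = \<alpha>2 \<cdot>\<^sub>m g2 + \<beta>2 \<cdot>\<^sub>m 1\<^sub>m n"
    using quadratic_relation_of_minimal_poly[OF assms(4,5,7)] by blast
  have hom: "semiring_hom (to_ac :: 'a \<Rightarrow> 'a alg_closure)" by unfold_locales simp_all
  have "map_mat to_ac ` gen_group n {g1, g2} \<subseteq> gen_group n {map_mat to_ac g1, map_mat to_ac g2}"
    using map_mat_gen_group[OF hom, of "{g1, g2}" n] assms(2,4) by simp
  with irreducible have "acts_irreducibly n (gen_group n {map_mat to_ac g1, map_mat to_ac g2})"
    by (rule acts_irreducibly_mono)
  moreover have "\<not> acts_irreducibly n (gen_group n {map_mat to_ac g1, map_mat to_ac g2})"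
    by (rule quadratic_pair_not_irreducible[OF _ _ _
          map_mat_quadratic_relation[OF hom assms(2) rel1(2)] _
          map_mat_quadratic_relation[OF hom assms(4) rel2(2)]])
      (use assms rel1 rel2 in simp_all)
  ultimately show False by contradiction
qed

end
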